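(* Let $E>0$, $\epsilon>0$ with $1-2\epsilon\ge0$, and let $B\in\mathbb R^3$ be a unit vector. Let $\mu,\mu_1,\mu_2$ be distinct points on the sphere $\sqrt E S^2=\{x\in\mathbb R^3:|x|=\sqrt E\}$, and assume that $$\left\langle\frac{\mu_i-\mu}{|\mu_i-\mu|},B\right\rangle>\sqrt{1-2\epsilon}\quad\text{for } i=1,2.$$ Then $|\mu_2-\mu_1|\le16\sqrt{\epsilon E}$. *)

theory Defs
  imports "HOL-Analysis.Analysis"
begin

end

theory Submission
  imports Defs
begin

text \<open>
  Write \<open>\<mu>\<^sub>i = \<mu> + n\<^sub>i u\<^sub>i\<close> with chord lengths \<open>n\<^sub>i\<close> and unit directions \<open>u\<^sub>i\<close>.
  Since \<open>\<mu>\<^sub>i\<close> and \<open>\<mu>\<close> lie on the same sphere of radius \<open>R\<close>, the chord length is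
  \<open>n\<^sub>i = -2\<langle>\<mu>, u\<^sub>i\<rangle>\<close>, so \<open>n\<^sub>i \<le> 2R\<close> and \<open>|n\<^sub>2 - n\<^sub>1| \<le> 2R|u\<^sub>2 - u\<^sub>1|\<close>;
  hence \<open>|\<mu>\<^sub>2 - \<mu>\<^sub>1| \<le> 4R|u\<^sub>2 - u\<^sub>1|\<close>. The angle condition puts both \<open>u\<^sub>i\<close> within
  \<open>2\<surd>\<epsilon>\<close> of \<open>B\<close>, so \<open>|u\<^sub>2 - u\<^sub>1| \<le> 4\<surd>\<epsilon>\<close>.
\<close>

lemma chord_length_eq_inner_sgn:
  fixes a m :: "'a::real_inner"
  assumes "norm a = norm m" "a \<noteq> m"
  shows "norm (a - m) = - 2 * (m \<bullet> sgn (a - m))"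
proof -
  define d where "d = a - m"
  have d_pos: "norm d > 0" using assms(2) d_def by simp
  have "(m + d) \<bullet> (m + d) = m \<bullet> m" using assms(1) d_def by (simp add: dot_square_norm)
  hence "norm d ^ 2 = - 2 * (m \<bullet> d)"
    by (simp add: algebra_simps inner_commute power2_norm_eq_inner)
  hence "norm d = - 2 * (m \<bullet> d) / norm d" using d_pos by (simp add: power2_eq_square field_simps)
  thus ?thesis by (simp add: d_def sgn_div_norm divide_inverse mult.commute)
qed

lemma chord_length_le:
  fixes a m :: "'a::real_inner"
  assumes "norm a = norm m" "a \<noteq> m"
  shows "norm (a - m) \<le> 2 * norm m"
proof -
  have "- (m \<bullet> sgn (a - m)) \<le> norm m * norm (sgn (a - m))"
    by (metis Cauchy_Schwarz_ineq2 abs_le_iff)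
  thus ?thesis using assms by (simp add: chord_length_eq_inner_sgn norm_sgn)
qed

lemma chord_length_diff_le:
  fixes a b m :: "'a::real_inner"
  assumes "norm a = norm m" "norm b = norm m" "a \<noteq> m" "b \<noteq> m"
  shows "\<bar>norm (b - m) - norm (a - m)\<bar> \<le> 2 * norm m * norm (sgn (b - m) - sgn (a - m))"
proof -
  have "norm (b - m) - norm (a - m) = - 2 * (m \<bullet> (sgn (b - m) - sgn (a - m)))"
    using assms by (simp add: chord_length_eq_inner_sgn algebra_simps)
  hence "\<bar>norm (b - m) - norm (a - m)\<bar> = 2 * \<bar>m \<bullet> (sgn (b - m) - sgn (a - m))\<bar>"
    by (simp add: abs_mult)
  also have "\<dots> \<le> 2 * (norm m * norm (sgn (b - m) - sgn (a - m)))"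
    using Cauchy_Schwarz_ineq2 by simp
  finally show ?thesis by simp
qed

lemma sphere_dist_le_direction_dist:
  fixes a b m :: "'a::real_inner"
  assumes "norm a = norm m" "norm b = norm m" "a \<noteq> m" "b \<noteq> m"
  shows "norm (b - a) \<le> 4 * norm m * norm (sgn (b - m) - sgn (a - m))"
proof -
  define u v where "u = sgn (a - m)" and "v = sgn (b - m)"
  have a_eq: "a - m = norm (a - m) *\<^sub>R u" and b_eq: "b - m = norm (b - m) *\<^sub>R v"
    using assms(3,4) by (simp_all add: u_def v_def sgn_div_norm)
  have v_unit: "norm v = 1" using assms(4) by (simp add: v_def norm_sgn)
  have "b - a = (b - m) - (a - m)" by simp
  also have "\<dots> = norm (b - m) *\<^sub>R v - norm (a - m) *\<^sub>R u"
    by (subst a_eq, subst b_eq) (rule refl)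
  also have "\<dots> = (norm (b - m) - norm (a - m)) *\<^sub>R v + norm (a - m) *\<^sub>R (v - u)"
    by (simp add: algebra_simps)
  finally have "b - a = (norm (b - m) - norm (a - m)) *\<^sub>R v + norm (a - m) *\<^sub>R (v - u)" .
  hence "norm (b - a) \<le> \<bar>norm (b - m) - norm (a - m)\<bar> + norm (a - m) * norm (v - u)"
    using norm_triangle_ineq[of "(norm (b - m) - norm (a - m)) *\<^sub>R v" "norm (a - m) *\<^sub>R (v - u)"]
      v_unit by simp
  also have "\<dots> \<le> 2 * norm m * norm (v - u) + 2 * norm m * norm (v - u)"
    using chord_length_diff_le[OF assms] chord_length_le[OF assms(1,3)]
    by (intro add_mono mult_right_mono) (simp_all add: u_def v_def)
  finally show ?thesis by (simp add: u_def v_def)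
qed

text \<open>Uses \<open>1 - s \<le> 1 - s\<^sup>2 = 2e\<close> for \<open>s = \<surd>(1 - 2e) \<in> [0, 1]\<close>.\<close>

lemma unit_vector_dist_le_of_inner_ge:
  fixes u w :: "'a::real_inner"
  assumes "norm u = 1" "norm w = 1" "u \<bullet> w \<ge> sqrt (1 - 2 * e)" "2 * e \<le> 1"
  shows "norm (u - w) \<le> 2 * sqrt e"
proof -
  define s where "s = sqrt (1 - 2 * e)"
  have s_nonneg: "s \<ge> 0" and s_sq: "s ^ 2 = 1 - 2 * e" using assms(4) by (simp_all add: s_def)
  have "u \<bullet> w \<le> 1" using Cauchy_Schwarz_ineq2[of u w] assms(1,2) by simp
  hence "s \<le> 1" using assms(3) unfolding s_def by linarith
  hence e_nonneg: "e \<ge> 0" by (simp add: s_def)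
  have "1 - s \<le> 2 * e" using \<open>s \<le> 1\<close> s_nonneg s_sq mult_left_le[of s s]
    by (simp add: power2_eq_square algebra_simps)
  have "norm (u - w) ^ 2 = 2 - 2 * (u \<bullet> w)"
    using dot_norm_neg[of u w] assms(1,2) by simp
  also have "\<dots> \<le> (2 * sqrt e) ^ 2"
    using \<open>1 - s \<le> 2 * e\<close> assms(3) e_nonneg by (simp add: s_def power_mult_distrib)
  finally show ?thesis by (rule power2_le_imp_le) (use e_nonneg in simp)
qed

theorem lemma5p5:
  fixes E \<epsilon> :: real and B \<mu> \<mu>1 \<mu>2 :: "real ^ 3"
  assumes "E > 0" and "\<epsilon> > 0" and "1 - 2 * \<epsilon> \<ge> 0"
    and "norm B = 1"
    and "norm \<mu> = sqrt E" and "norm \<mu>1 = sqrt E" and "norm \<mu>2 = sqrt E"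
    and "\<mu> \<noteq> \<mu>1" and "\<mu> \<noteq> \<mu>2" and "\<mu>1 \<noteq> \<mu>2"
    and "((\<mu>1 - \<mu>) /\<^sub>R norm (\<mu>1 - \<mu>)) \<bullet> B > sqrt (1 - 2 * \<epsilon>)"
    and "((\<mu>2 - \<mu>) /\<^sub>R norm (\<mu>2 - \<mu>)) \<bullet> B > sqrt (1 - 2 * \<epsilon>)"
  shows "norm (\<mu>2 - \<mu>1) \<le> 16 * sqrt (\<epsilon> * E)"
proof -
  define u1 u2 where "u1 = sgn (\<mu>1 - \<mu>)" and "u2 = sgn (\<mu>2 - \<mu>)"
  have "norm (u1 - B) \<le> 2 * sqrt \<epsilon>" "norm (u2 - B) \<le> 2 * sqrt \<epsilon>"
    using assms(3,4,8,9,11,12)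
    by (auto intro!: unit_vector_dist_le_of_inner_ge simp: u1_def u2_def sgn_div_norm norm_sgn)
  hence directions_close: "norm (u2 - u1) \<le> 4 * sqrt \<epsilon>"
    using norm_triangle_ineq4[of "u2 - B" "u1 - B"] by simp
  have "norm (\<mu>2 - \<mu>1) \<le> 4 * sqrt E * norm (u2 - u1)"
    using sphere_dist_le_direction_dist[of \<mu>1 \<mu> \<mu>2] assms(5-9) by (simp add: u1_def u2_def)
  also have "\<dots> \<le> 4 * sqrt E * (4 * sqrt \<epsilon>)"
    using directions_close by (rule mult_left_mono) (use assms(1) in simp)
  also have "\<dots> = 16 * sqrt (\<epsilon> * E)"
    by (simp add: real_sqrt_mult)
  finally show ?thesis .
qed

end
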